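(* Let $a$, $b$ and $d>1$ be pairwise coprime odd positive integers and let $\beta\geq 2$ be an integer. Then there exists a positive integer $k$ with $2^\beta d\mid(a^k+b^k)$ if and only if $2^\beta\mid(a+b)$ and $2\,\|\,\operatorname{ord}_p(\frac ab)$ for every prime $p$ dividing $d$. In this case, $\operatorname{ord}_{2^\beta}(\frac ab)=2$ and $2\,\|\,\operatorname{ord}_{2^\beta d}(\frac ab)$.
   Context: For $n$ coprime to $ab$, $\operatorname{ord}_n(\frac ab)$ denotes the multiplicative order of $ab^{-1}$ modulo $n$. $2\,\|\,m$ means $2\mid m$ and $4\nmid m$. *)

theory Defs
  imports "HOL-Number_Theory.Number_Theory"
begin

definition ord_frac :: "nat \<Rightarrow> nat \<Rightarrow> nat \<Rightarrow> nat" where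
  "ord_frac n a b = ord n (a * modular_inverse n b)"

definition exactly_two_dvd :: "nat \<Rightarrow> bool" where
  "exactly_two_dvd m \<longleftrightarrow> 2 dvd m \<and> \<not> 4 dvd m"

end

theory Submission
  imports Defs
begin

(* Fix an inverse B of b modulo 2^\<beta> d and put c = a B. Then a^k + b^k is b^k (c^k + 1) modulo
   every divisor of 2^\<beta> d, and ord_frac n a b = ord n c, so everything is about solving
   c^k = -1. If n > 2 divides c^k + 1 with k odd, then ord n c divides 2k but not k, so it is
   2 modulo 4; and 4 | c^k + 1 forces k odd, whence c^k + 1 = (c + 1) * (odd) gives 2^\<beta> | c + 1.
   Conversely, ord p c = 2 t_p with t_p odd gives c^t_p = -1 (mod p). For the odd number
   T = prod t_p the number y = c^T is -1 modulo every prime divisor of d, and the identity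
   y^p - 1 = (y - 1)(1 + y + ... + y^(p-1)) lifts this to y^d = -1 (mod d). As T d is odd,
   c^(T d) = -1 modulo 2^\<beta> d. *)

lemma ord_of_nat: "ord (int n) (int x) = ord n x"
  unfolding ord_def by (simp flip: of_nat_power cong_int_iff)

lemma cong_int_power_eq_1_iff_ord_dvd: "[int c ^ m = 1] (mod int n) \<longleftrightarrow> ord n c dvd m"
  by (metis cong_int_iff of_nat_1 of_nat_power ord_divides)

lemma cong_minus_1_iff_dvd_add_1: "[int x = -1] (mod int n) \<longleftrightarrow> n dvd x + 1"
proof -
  have "[int x = -1] (mod int n) \<longleftrightarrow> int n dvd int (x + 1)"
    by (simp add: cong_iff_dvd_diff add.commute)
  thus ?thesis
    by (simp only: of_nat_dvd_iff)
qed

lemma cong_minus_1_1_iff_dvd_2: "[-1 = 1 :: int] (mod int n) \<longleftrightarrow> n dvd 2"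
  using cong_minus_1_iff_dvd_add_1[of 1 n] by (simp add: cong_sym_eq numeral_2_eq_2)

lemma ord_frac_eq_ord_mult:
  assumes "n > 0" "[b * B = 1] (mod n)"
  shows "ord_frac n a b = ord n (a * B)"
proof -
  have "[int b * int B = 1] (mod int n)"
    using assms(2) by (metis cong_int_iff of_nat_1 of_nat_mult)
  hence "modular_inverse (int n) (int b) = int B mod int n"
    using assms(1) by (intro modular_inverse_int_eqI) (auto simp: cong_def mod_mult_right_eq)
  hence "[int a * modular_inverse (int n) (int b) = int (a * B)] (mod int n)"
    by (simp add: cong_def mod_mult_right_eq)
  thus ?thesis
    unfolding ord_frac_def by (simp only: ord_cong ord_of_nat)
qed

lemma dvd_add_powers_iff_dvd_power_add_1:
  fixes a b B n :: nat
  assumes "[b * B = 1] (mod n)"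
  shows "n dvd a ^ k + b ^ k \<longleftrightarrow> n dvd (a * B) ^ k + 1"
proof -
  have "[(b * B) ^ k * a ^ k + b ^ k = 1 * a ^ k + b ^ k] (mod n)"
    using cong_pow[OF assms, of k] by (intro cong_add cong_mult cong_refl) simp
  hence "[b ^ k * ((a * B) ^ k + 1) = a ^ k + b ^ k] (mod n)"
    by (simp add: algebra_simps)
  hence "n dvd a ^ k + b ^ k \<longleftrightarrow> n dvd b ^ k * ((a * B) ^ k + 1)"
    by (simp add: cong_dvd_iff)
  moreover have "coprime n (b ^ k)"
    using assms by (metis coprime_iff_invertible_nat coprime_commute coprime_power_right_iff One_nat_def)
  ultimately show ?thesis
    using coprime_dvd_mult_right_iff by blast
qed

lemma odd_exponent_if_four_dvd_power_add_1:
  fixes c :: nat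
  assumes "odd c" "4 dvd c ^ k + 1"
  shows "odd k"
proof
  assume "even k"
  then obtain j where "k = 2 * j" by blast
  hence "[c ^ k = 1] (mod 8)"
    using square_mod_8_eq_1_iff[of "c ^ j"] assms(1) by (simp add: power_mult mult.commute)
  hence "[c ^ k = 1] (mod 4)"
    by (rule cong_dvd_modulus_nat) simp
  hence "[c ^ k + 1 = 1 + 1] (mod 4)"
    by (intro cong_add cong_refl)
  hence "4 dvd c ^ k + 1 \<longleftrightarrow> 4 dvd (2::nat)"
    by (simp only: cong_dvd_iff one_add_one)
  with assms(2) show False
    by simp
qed

lemma two_power_dvd_add_1_if_dvd_power_add_1:
  fixes c :: nat
  assumes "odd c" "odd k" "2 ^ j dvd c ^ k + 1"
  shows "2 ^ j dvd c + 1"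
proof -
  define S where "S = (\<Sum>i<k. (- int c) ^ i)"
  have "int (c ^ k + 1) = int (c + 1) * S"
    using one_diff_power_eq[of "- int c" k] assms(2) unfolding S_def by simp
  moreover have "odd S"
    using assms(1,2) unfolding S_def by (simp add: even_sum_iff)
  ultimately have "int (2 ^ j) dvd int (c + 1) * S"
    using assms(3) by (metis of_nat_dvd_iff)
  moreover have "coprime (int (2 ^ j)) S"
    using \<open>odd S\<close> by simp
  ultimately have "int (2 ^ j) dvd int (c + 1)"
    by (simp add: coprime_dvd_mult_left_iff)
  thus ?thesis
    by (simp only: of_nat_dvd_iff)
qed

lemma exactly_two_dvd_ord_if_dvd_power_add_1:
  fixes c n :: nat
  assumes "n dvd c ^ k + 1" "odd k" "\<not> n dvd 2"
  shows "exactly_two_dvd (ord n c)"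
proof -
  have "[int c ^ k = -1] (mod int n)"
    using assms(1) by (simp only: cong_minus_1_iff_dvd_add_1 flip: of_nat_power)
  hence "[(int c ^ k) ^ 2 = (-1) ^ 2] (mod int n)"
    by (rule cong_pow)
  hence "[int c ^ (2 * k) = 1] (mod int n)"
    by (simp add: power_mult mult.commute)
  hence "ord n c dvd 2 * k"
    by (simp only: cong_int_power_eq_1_iff_ord_dvd)
  moreover have "\<not> ord n c dvd k"
  proof
    assume "ord n c dvd k"
    hence "[int c ^ k = 1] (mod int n)"
      by (simp only: cong_int_power_eq_1_iff_ord_dvd)
    with \<open>[int c ^ k = -1] (mod int n)\<close> have "[-1 = 1 :: int] (mod int n)"
      by (metis cong_sym cong_trans)
    with assms(3) show False
      by (simp add: cong_minus_1_1_iff_dvd_2)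
  qed
  ultimately have "even (ord n c)"
    using coprime_dvd_mult_right_iff[of "ord n c" 2 k] by fastforce
  moreover have "\<not> 4 dvd ord n c"
  proof
    assume "4 dvd ord n c"
    hence "4 dvd 2 * k"
      using \<open>ord n c dvd 2 * k\<close> by (rule dvd_trans)
    with assms(2) show False
      by auto
  qed
  ultimately show ?thesis
    unfolding exactly_two_dvd_def by blast
qed

lemma ord_eq_2_if_dvd_add_1:
  fixes c n :: nat
  assumes "n dvd c + 1" "\<not> n dvd 2"
  shows "ord n c = 2"
proof -
  have "[int c = -1] (mod int n)"
    using assms(1) cong_minus_1_iff_dvd_add_1 by blast
  moreover have "\<not> [-1 = 1 :: int] (mod int n)"
    using assms(2) by (simp add: cong_minus_1_1_iff_dvd_2)
  ultimately have "\<not> [int c = 1] (mod int n)"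
    by (metis cong_sym cong_trans)
  moreover have "[int c ^ 2 = 1] (mod int n)"
    using cong_pow[OF \<open>[int c = -1] (mod int n)\<close>, of 2] by simp
  ultimately show ?thesis
    by (simp add: ord_eq_2_iff flip: cong_int_iff)
qed

lemma ord_conditions_if_dvd_power_add_1:
  fixes c d j k :: nat
  assumes "odd c" "odd d" "2 \<le> j" "2 ^ j * d dvd c ^ k + 1"
  shows "2 ^ j dvd c + 1"
    and "\<And>p. prime p \<Longrightarrow> p dvd d \<Longrightarrow> exactly_two_dvd (ord p c)"
    and "ord (2 ^ j) c = 2"
    and "exactly_two_dvd (ord (2 ^ j * d) c)"
proof -
  have "4 dvd (2::nat) ^ j"
    using le_imp_power_dvd[OF assms(3), of 2] by simp
  have not_dvd_2: "\<not> 2 ^ j * d' dvd 2" for d' :: nat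
  proof
    assume "2 ^ j * d' dvd 2"
    with \<open>4 dvd 2 ^ j\<close> have "4 dvd (2::nat)"
      by (rule dvd_trans[OF dvd_mult2])
    thus False
      by simp
  qed
  have two_pow_dvd: "2 ^ j dvd c ^ k + 1"
    using assms(4) by (rule dvd_mult_left)
  with \<open>4 dvd 2 ^ j\<close> have "4 dvd c ^ k + 1"
    by (rule dvd_trans)
  with assms(1) have "odd k"
    by (rule odd_exponent_if_four_dvd_power_add_1)
  show "2 ^ j dvd c + 1"
    using assms(1) \<open>odd k\<close> two_pow_dvd by (rule two_power_dvd_add_1_if_dvd_power_add_1)
  thus "ord (2 ^ j) c = 2"
    using not_dvd_2[of 1] by (intro ord_eq_2_if_dvd_add_1) simp_all
  show "exactly_two_dvd (ord (2 ^ j * d) c)"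
    using assms(4) \<open>odd k\<close> not_dvd_2 by (rule exactly_two_dvd_ord_if_dvd_power_add_1)
  show "exactly_two_dvd (ord p c)" if "prime p" "p dvd d" for p
  proof (rule exactly_two_dvd_ord_if_dvd_power_add_1)
    show "p dvd c ^ k + 1"
      using that(2) dvd_mult_right[OF assms(4)] by (rule dvd_trans)
    show "odd k"
      by fact
    show "\<not> p dvd 2"
      using that assms(2) primes_dvd_imp_eq[of p 2] by auto
  qed
qed

lemma power_add_1_dvd_power_mult_add_1:
  fixes x :: nat
  assumes "odd r"
  shows "x ^ t + 1 dvd x ^ (t * r) + 1"
proof -
  have "[int (x ^ t) = -1] (mod int (x ^ t + 1))"
    by (simp only: cong_minus_1_iff_dvd_add_1 dvd_refl)
  hence "[int (x ^ t) ^ r = (-1) ^ r] (mod int (x ^ t + 1))"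
    by (rule cong_pow)
  hence "[int (x ^ (t * r)) = -1] (mod int (x ^ t + 1))"
    using assms by (simp add: power_mult)
  thus ?thesis
    by (simp only: cong_minus_1_iff_dvd_add_1)
qed

lemma prime_dvd_power_half_ord_add_1:
  fixes c p :: nat
  assumes "prime p" "coprime p c" "even (ord p c)"
  shows "p dvd c ^ (ord p c div 2) + 1"
proof -
  define t where "t = ord p c div 2"
  have ord_eq: "ord p c = 2 * t"
    using assms(3) unfolding t_def by simp
  moreover have "0 < ord p c"
    using assms(2) by simp
  ultimately have "0 < t"
    by simp
  have "int p dvd int c ^ (2 * t) - 1"
    using cong_int_power_eq_1_iff_ord_dvd[of c "ord p c" p] by (simp add: ord_eq cong_iff_dvd_diff)
  also have "int c ^ (2 * t) - 1 = (int c ^ t - 1) * (int c ^ t + 1)"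
    by (simp only: mult_2 power_add) (simp add: algebra_simps)
  finally have "int p dvd (int c ^ t - 1) * (int c ^ t + 1)" .
  moreover have "\<not> [int c ^ t = 1] (mod int p)"
  proof
    assume "[int c ^ t = 1] (mod int p)"
    hence "ord p c \<le> t"
      using \<open>0 < t\<close> by (simp add: cong_int_power_eq_1_iff_ord_dvd dvd_imp_le)
    with ord_eq \<open>0 < t\<close> show False
      by simp
  qed
  moreover have "prime (int p)"
    using assms(1) by simp
  ultimately have "int p dvd int c ^ t + 1"
    by (auto simp: prime_dvd_mult_iff cong_iff_dvd_diff)
  hence "[int (c ^ t) = -1] (mod int p)"
    by (simp add: cong_iff_dvd_diff)
  thus ?thesis
    unfolding t_def by (simp only: cong_minus_1_iff_dvd_add_1)
qed

lemma cong_power_eq_1_mult_modulus: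
  fixes y m :: int and p :: nat
  assumes "[y = 1] (mod m)" "[y = 1] (mod int p)"
  shows "[y ^ p = 1] (mod m * int p)"
proof -
  have "[y ^ i = 1] (mod int p)" for i
    using cong_pow[OF assms(2), of i] by simp
  hence "[(\<Sum>i<p. y ^ i) = (\<Sum>i<p. 1)] (mod int p)"
    by (rule cong_sum)
  hence "int p dvd (\<Sum>i<p. y ^ i)"
    using cong_dvd_iff by fastforce
  moreover have "m dvd y - 1"
    using assms(1) by (simp add: cong_iff_dvd_diff)
  ultimately have "m * int p dvd (y - 1) * (\<Sum>i<p. y ^ i)"
    by (rule mult_dvd_mono[rotated])
  thus ?thesis
    by (simp add: cong_iff_dvd_diff power_diff_1_eq)
qed

lemma cong_power_self_eq_1:
  fixes x :: int and n :: nat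
  assumes "n > 0" "\<And>p. prime p \<Longrightarrow> p dvd n \<Longrightarrow> [x = 1] (mod int p)"
  shows "[x ^ n = 1] (mod int n)"
  using assms
proof (induction n rule: less_induct)
  case (less n)
  show ?case
  proof (cases "n = 1")
    case False
    then obtain p m where p: "prime p" "n = m * p"
      using less.prems(1) prime_factor_nat by (metis dvd_def mult.commute)
    hence "m < n" "m > 0"
      using less.prems(1) prime_gt_1_nat by auto
    hence "[x ^ m = 1] (mod int m)"
      using less.IH less.prems(2) p(2) by simp
    moreover have "[x ^ m = 1] (mod int p)"
      using cong_pow[OF less.prems(2)[OF p(1)]] p(2) by simp
    ultimately have "[(x ^ m) ^ p = 1] (mod int m * int p)"
      by (rule cong_power_eq_1_mult_modulus)
    thus ?thesis
      using p(2) by (simp add: power_mult)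
  qed simp
qed

lemma odd_dvd_power_self_add_1:
  fixes y n :: nat
  assumes "odd n" "\<And>p. prime p \<Longrightarrow> p dvd n \<Longrightarrow> p dvd y + 1"
  shows "n dvd y ^ n + 1"
proof -
  have "[(- int y) ^ n = 1] (mod int n)"
  proof (rule cong_power_self_eq_1)
    show "n > 0"
      using assms(1) by (rule odd_pos)
    show "[- int y = 1] (mod int p)" if "prime p" "p dvd n" for p
      using assms(2)[OF that] cong_minus_minus_iff[of "int y" "-1" "int p"]
      by (simp add: cong_minus_1_iff_dvd_add_1)
  qed
  hence "[- int (y ^ n) = - (-1)] (mod int n)"
    using assms(1) by (simp add: power_minus_odd)
  hence "[int (y ^ n) = -1] (mod int n)"
    by (simp only: cong_minus_minus_iff)
  thus ?thesis
    by (simp only: cong_minus_1_iff_dvd_add_1)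
qed

lemma exists_dvd_power_add_1:
  fixes c d j :: nat
  assumes "odd d" "2 ^ j dvd c + 1"
    and "\<And>p. prime p \<Longrightarrow> p dvd d \<Longrightarrow> exactly_two_dvd (ord p c)"
  shows "\<exists>k>0. 2 ^ j * d dvd c ^ k + 1"
proof -
  define T where "T = (\<Prod>p\<in>prime_factors d. ord p c div 2)"
  have half_odd: "odd (ord p c div 2)" if "prime p" "p dvd d" for p
  proof -
    have "exactly_two_dvd (ord p c)"
      using assms(3) that .
    thus ?thesis
      unfolding exactly_two_dvd_def by presburger
  qed
  hence "odd T"
    unfolding T_def by (auto simp: even_prod_iff in_prime_factors_iff)
  have "p dvd c ^ T + 1" if "prime p" "p dvd d" for p
  proof -
    have "p \<in> prime_factors d"
      using that odd_pos[OF assms(1)] by (simp add: in_prime_factors_iff)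
    then obtain r where r: "T = (ord p c div 2) * r"
      unfolding T_def by (metis dvd_prodI finite_set_mset dvdE)
    have "exactly_two_dvd (ord p c)"
      using assms(3) that .
    hence "coprime p c" "even (ord p c)"
      using ord_eq_0[of p c] unfolding exactly_two_dvd_def by auto
    with that(1) have "p dvd c ^ (ord p c div 2) + 1"
      by (intro prime_dvd_power_half_ord_add_1)
    also have "c ^ (ord p c div 2) + 1 dvd c ^ T + 1"
      using \<open>odd T\<close> power_add_1_dvd_power_mult_add_1 unfolding r by simp
    finally show ?thesis .
  qed
  with assms(1) have "d dvd (c ^ T) ^ d + 1"
    by (rule odd_dvd_power_self_add_1)
  moreover have "2 ^ j dvd c ^ (T * d) + 1"
    using assms(2) power_add_1_dvd_power_mult_add_1[of "T * d" c 1] \<open>odd T\<close> assms(1)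
    by (simp add: dvd_trans)
  moreover have "coprime (2 ^ j) d"
    using assms(1) by simp
  ultimately have "2 ^ j * d dvd c ^ (T * d) + 1"
    by (simp add: divides_mult power_mult)
  moreover have "T * d > 0"
    using \<open>odd T\<close> assms(1) by (simp add: odd_pos)
  ultimately show ?thesis
    by blast
qed

theorem proposition2p7:
  fixes a b d \<beta> :: nat
  assumes "a > 0" "b > 0" "d > 1"
    and "odd a" "odd b" "odd d"
    and "coprime a b" "coprime a d" "coprime b d"
    and "\<beta> \<ge> 2"
  shows "((\<exists>k>0. 2 ^ \<beta> * d dvd a ^ k + b ^ k) \<longleftrightarrow>
           (2 ^ \<beta> dvd a + b \<and>
            (\<forall>p. prime p \<and> p dvd d \<longrightarrow> exactly_two_dvd (ord_frac p a b))))
       \<and> ((\<exists>k>0. 2 ^ \<beta> * d dvd a ^ k + b ^ k) \<longrightarrow>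
           ord_frac (2 ^ \<beta>) a b = 2 \<and> exactly_two_dvd (ord_frac (2 ^ \<beta> * d) a b))"
proof -
  have "coprime b (2 ^ \<beta> * d)"
    using assms(5,9) by simp
  then obtain B where "[b * B = 1] (mod 2 ^ \<beta> * d)"
    using cong_solve_coprime_nat by fastforce
  hence inverse: "[b * B = 1] (mod n)" if "n dvd 2 ^ \<beta> * d" for n
    using that by (rule cong_dvd_modulus_nat)
  define c where "c = a * B"
  have "odd B"
    using inverse[of 2] assms(10) by (auto simp: cong_def dvd_power)
  hence "odd c"
    unfolding c_def using assms(4) by simp
  have ord_frac_eq: "ord_frac n a b = ord n c" if "n dvd 2 ^ \<beta> * d" for n
    unfolding c_def using that odd_pos[OF assms(6)]
    by (intro ord_frac_eq_ord_mult inverse) (auto intro: Nat.gr0I)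
  have dvd_iff: "n dvd a ^ k + b ^ k \<longleftrightarrow> n dvd c ^ k + 1" if "n dvd 2 ^ \<beta> * d" for n k
    unfolding c_def using inverse[OF that] by (rule dvd_add_powers_iff_dvd_power_add_1)
  have divides_modulus: "p dvd 2 ^ \<beta> * d" if "p dvd d" for p
    using that by simp
  show ?thesis
    using ord_conditions_if_dvd_power_add_1[OF \<open>odd c\<close> assms(6,10)]
      exists_dvd_power_add_1[OF assms(6), of \<beta> c]
      ord_frac_eq[OF divides_modulus] ord_frac_eq[of "2 ^ \<beta>"] ord_frac_eq[of "2 ^ \<beta> * d"]
      dvd_iff[of "2 ^ \<beta> * d"] dvd_iff[of "2 ^ \<beta>" 1]
    by auto
qed

end
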